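(* Let $\sigma=(M_1,M_2)$ be a schedule of $n$ jobs on two identical machines and let $k\ge 1$. Running the randomized $k$-swap algorithm (described in the context) $O(\sqrt{k})$ times independently for each of the parameter values $\tilde k\in\{1,2,\dots,k\}$ (i.e. with $\tilde k$ in place of $k$) takes $O(k^{3/2}\cdot n^{\lceil k/2\rceil}\cdot \log n)$ steps in total, and, if $\sigma$ has an improving neighbor in the $k$-swap neighborhood, this procedure finds an improving solution in the $k$-swap neighborhood with probability of success at least $1-\frac1e$.
   Context: Problem $P2\|C_{\max}$: we are given $n$ jobs with processing times $p_j>0$ and two identical machines. A schedule $\sigma=(M_1,M_2)$ is a partition of the jobs into the sets $M_1,M_2$ of jobs processed on machine 1 and machine 2. The load of machine $i$ is $L_i=\sum_{j\in M_i}p_j$; the makespan is $L_{\max}=\max_i L_i$, $L_{\min}=\min_i L_i$, and $\Delta=L_{\max}-L_{\min}$. A machine with load $L_{\max}$ is critical; one with load $L_{\min}$ is the min-load machine. A $k$-swap neighbor of $\sigma$ is obtained by selecting $k'$ jobs on one machine and $k''$ jobs on the other machine with $k'+k''\le k$ and interchanging the machine assignments of these jobs. A neighbor is improving (a better solution) if its makespan is strictly smaller than that of $\sigma$; equivalently, there are a set $S'$ of jobs on the critical machine and a set $S''$ of jobs on the min-load machine with $|S'|+|S''|\le k$ and $0<\sum_{j\in S'}p_j-\sum_{j\in S''}p_j<\Delta$, which are interchanged. Randomized $k$-swap algorithm (input: $\sigma$ and $k$; label the machines so that machine 1 is critical): (1) assign each job independently and uniformly at random to one of two sets $A$ or $B$;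 (2) for every $S_1\subseteq A$ with $|S_1|=\lceil k/2\rceil$ put the value $\sum_{j\in S_1\cap M_1}p_j-\sum_{j\in S_1\cap M_2}p_j$ (with a reference to $S_1$) into $A_\Sigma$; (3) for every $S_2\subseteq B$ with $|S_2|=\lfloor k/2\rfloor$ put $\sum_{j\in S_2\cap M_1}p_j-\sum_{j\in S_2\cap M_2}p_j$ (with a reference to $S_2$) into $B_\Sigma$; (4) sort $B_\Sigma$ in non-decreasing order; (5) for each $x\in A_\Sigma$, search (by binary search) for a $y\in B_\Sigma$ with $-x<y<\Delta-x$; if found, update $\sigma$ by interchanging the machine assignments of all jobs in the corresponding $S_1\cup S_2$ and return True; (6) otherwise return False. Whenever the algorithm returns True, the updated schedule has strictly smaller makespan. *)

theory Defs
  imports "HOL-Probability.Probability"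
begin

(* Jobs are 0..<n with processing times p. A schedule is given by the set M1 of
   jobs on machine 1; machine 2 gets the remaining jobs {..<n} - M1. *)

definition load2 :: "nat \<Rightarrow> (nat \<Rightarrow> real) \<Rightarrow> nat set \<Rightarrow> real" where
  "load2 n p M1 = sum p ({..<n} - M1)"

definition makespan :: "nat \<Rightarrow> (nat \<Rightarrow> real) \<Rightarrow> nat set \<Rightarrow> real" where
  "makespan n p M1 = max (sum p M1) (load2 n p M1)"

definition Delta :: "nat \<Rightarrow> (nat \<Rightarrow> real) \<Rightarrow> nat set \<Rightarrow> real" where
  "Delta n p M1 = max (sum p M1) (load2 n p M1) - min (sum p M1) (load2 n p M1)"

definition swap_jobs :: "nat set \<Rightarrow> nat set \<Rightarrow> nat set" where
  "swap_jobs T M1 = (M1 - T) \<union> (T - M1)"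

definition kswap_neighbor :: "nat \<Rightarrow> nat \<Rightarrow> nat set \<Rightarrow> nat set \<Rightarrow> bool" where
  "kswap_neighbor n k M1 M1' \<longleftrightarrow>
     (\<exists>T'' T'. T' \<subseteq> M1 \<and> T'' \<subseteq> {..<n} - M1 \<and> card T' + card T'' \<le> k
             \<and> M1' = swap_jobs (T' \<union> T'') M1)"

(* the critical machine (labelled "machine 1" by the algorithm) and the other one *)
definition crit :: "nat \<Rightarrow> (nat \<Rightarrow> real) \<Rightarrow> nat set \<Rightarrow> nat set" where
  "crit n p M1 = (if sum p M1 \<ge> load2 n p M1 then M1 else {..<n} - M1)"

definition noncrit :: "nat \<Rightarrow> (nat \<Rightarrow> real) \<Rightarrow> nat set \<Rightarrow> nat set" where
  "noncrit n p M1 = {..<n} - crit n p M1"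

(* value put into A_Sigma / B_Sigma for a set S of jobs *)
definition sval :: "nat \<Rightarrow> (nat \<Rightarrow> real) \<Rightarrow> nat set \<Rightarrow> nat set \<Rightarrow> real" where
  "sval n p M1 S = sum p (S \<inter> crit n p M1) - sum p (S \<inter> noncrit n p M1)"

(* A pair (S1,S2) that step (5) of the randomized kt-swap algorithm can find, for the
   random partition a (job j is in A iff a j, in B otherwise). *)
definition found_pair ::
  "nat \<Rightarrow> (nat \<Rightarrow> real) \<Rightarrow> nat set \<Rightarrow> nat \<Rightarrow> (nat \<Rightarrow> bool) \<Rightarrow> nat set \<Rightarrow> nat set \<Rightarrow> bool" where
  "found_pair n p M1 kt a S1 S2 \<longleftrightarrow>
     S1 \<subseteq> {j. j < n \<and> a j} \<and> card S1 = (kt + 1) div 2 \<and>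
     S2 \<subseteq> {j. j < n \<and> \<not> a j} \<and> card S2 = kt div 2 \<and>
     - sval n p M1 S1 < sval n p M1 S2 \<and> sval n p M1 S2 < Delta n p M1 - sval n p M1 S1"

definition kswap_returns_true ::
  "nat \<Rightarrow> (nat \<Rightarrow> real) \<Rightarrow> nat set \<Rightarrow> nat \<Rightarrow> (nat \<Rightarrow> bool) \<Rightarrow> bool" where
  "kswap_returns_true n p M1 kt a \<longleftrightarrow> (\<exists>S1 S2. found_pair n p M1 kt a S1 S2)"

(* Cost model (number of elementary steps) of one full run with parameter kt on partition a:
   step (1): n; step (2): |A_Sigma| sums of ceil(kt/2) terms; step (3): |B_Sigma| sums of
   floor(kt/2) terms; step (4): sorting, |B_Sigma| * log2(|B_Sigma|+1); step (5): one binary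
   search per element of A_Sigma, log2(|B_Sigma|+1) each; final update: kt. *)
definition run_cost :: "nat \<Rightarrow> nat \<Rightarrow> (nat \<Rightarrow> bool) \<Rightarrow> real" where
  "run_cost n kt a =
     (let cA = card {j. j < n \<and> a j} choose ((kt + 1) div 2);
          cB = card {j. j < n \<and> \<not> a j} choose (kt div 2)
      in real n + real cA * real ((kt + 1) div 2) + real cB * real (kt div 2)
         + real cB * log 2 (real cB + 1) + real cA * log 2 (real cB + 1) + real kt)"

(* Distribution of the random bits of the whole procedure: for every parameter kt in 1..k,
   run index i < r and job j < n an independent fair coin (True = job j goes to A). *)
definition proc_pmf :: "nat \<Rightarrow> nat \<Rightarrow> nat \<Rightarrow> (nat \<times> nat \<times> nat \<Rightarrow> bool) pmf" where
  "proc_pmf n k r = Pi_pmf ({1..k} \<times> {..<r} \<times> {..<n}) False (\<lambda>_. bernoulli_pmf (1/2))"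

end

theory Submission
  imports Defs
begin

(* Swapping a set T of jobs lowers the makespan iff the load d moved off the critical
   machine satisfies 0 < d < Delta, and d is additive over disjoint parts of T.  Hence a pair
   (S1, S2) found by the algorithm yields an improving neighbour, and conversely an improving
   swap T with |T| = m is found by the run with parameter m whenever the random partition puts
   exactly ceil(m/2) jobs of T into A.  This happens with probability
   binom(m, ceil(m/2)) / 2^m >= 1 / (2 sqrt m), by the central binomial estimate
   binom(2j, j)^2 * 4j >= 16^j.  The r >= 2 sqrt k runs with parameter m use disjoint blocks of
   independent coins, so all of them fail with probability at most (1 - 1/(2 sqrt m))^r <= 1/e.
   Running time: one run with parameter kt costs O(kt n^ceil(kt/2) log n), and summing over
   kt <= k and r = O(sqrt k) runs gives O(k^(3/2) n^ceil(k/2) log n). *)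

lemma load2_eq:
  assumes "M1 \<subseteq> {..<n}"
  shows "load2 n p M1 = sum p {..<n} - sum p M1"
  using assms by (simp add: load2_def sum_diff)

lemma sum_swap_jobs:
  fixes p :: "nat \<Rightarrow> 'a::ab_group_add"
  assumes "finite M1" "finite T"
  shows "sum p (swap_jobs T M1) = sum p M1 - sum p (T \<inter> M1) + sum p (T - M1)"
proof -
  have "sum p (swap_jobs T M1) = sum p (M1 - T) + sum p (T - M1)"
    unfolding swap_jobs_def using assms by (intro sum.union_disjoint) auto
  moreover have "sum p M1 = sum p (M1 - T) + sum p (T \<inter> M1)"
    using sum.Int_Diff[OF assms(1), of p T] by (simp add: Int_commute add.commute)
  ultimately show ?thesis by simp
qed

lemma swap_jobs_subset:
  assumes "M1 \<subseteq> {..<n}" "T \<subseteq> {..<n}"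
  shows "swap_jobs T M1 \<subseteq> {..<n}"
  using assms unfolding swap_jobs_def by auto

lemma sval_eq:
  assumes "T \<subseteq> {..<n}"
  shows "sval n p M1 T = sum p (T \<inter> crit n p M1) - sum p (T - crit n p M1)"
proof -
  have "T \<inter> noncrit n p M1 = T - crit n p M1"
    using assms unfolding noncrit_def by auto
  then show ?thesis unfolding sval_def by simp
qed

lemma makespan_swap_jobs_less_iff:
  fixes p :: "nat \<Rightarrow> real"
  assumes M1: "M1 \<subseteq> {..<n}" and T: "T \<subseteq> {..<n}"
  shows "makespan n p (swap_jobs T M1) < makespan n p M1 \<longleftrightarrow>
         0 < sval n p M1 T \<and> sval n p M1 T < Delta n p M1"
proof -
  have fin: "finite M1" "finite T" using M1 T finite_subset by auto
  define d where "d = sum p (T \<inter> M1) - sum p (T - M1)"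
  define L1 where "L1 = sum p M1"
  define L2 where "L2 = load2 n p M1"
  have L1': "sum p (swap_jobs T M1) = L1 - d"
    using sum_swap_jobs[OF fin, of p] unfolding L1_def d_def by simp
  have L2': "load2 n p (swap_jobs T M1) = L2 + d"
    using load2_eq[OF swap_jobs_subset[OF M1 T], of p] load2_eq[OF M1, of p] L1'
    unfolding L2_def L1_def by simp
  have sv: "sval n p M1 T = (if L2 \<le> L1 then d else - d)"
  proof (cases "L2 \<le> L1")
    case True
    then show ?thesis unfolding sval_eq[OF T] crit_def d_def L1_def L2_def by simp
  next
    case False
    have "T \<inter> ({..<n} - M1) = T - M1" "T - ({..<n} - M1) = T \<inter> M1" using T by auto
    with False show ?thesis unfolding sval_eq[OF T] crit_def d_def L1_def L2_def by simp
  qed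
  show ?thesis
    unfolding makespan_def Delta_def L1' L2' sv L1_def[symmetric] L2_def[symmetric]
    by (cases "L2 \<le> L1") (simp_all add: max_def min_def, linarith+)
qed

lemma sval_Un:
  assumes "finite S1" "finite S2" "S1 \<inter> S2 = {}"
  shows "sval n p M1 (S1 \<union> S2) = sval n p M1 S1 + sval n p M1 S2"
proof -
  have "sum p ((S1 \<union> S2) \<inter> C) = sum p (S1 \<inter> C) + sum p (S2 \<inter> C)" for C
    using assms by (simp add: Int_Un_distrib2 sum.union_disjoint disjoint_iff)
  then show ?thesis unfolding sval_def by simp
qed

lemma kswap_neighbor_swap_jobs:
  assumes "T \<subseteq> {..<n}" "card T \<le> k"
  shows "kswap_neighbor n k M1 (swap_jobs T M1)"
  unfolding kswap_neighbor_def
proof (intro exI conjI)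
  have split: "T \<inter> M1 \<union> (T - M1) = T" by auto
  have "finite T" using assms(1) finite_subset by auto
  then have "card (T \<inter> M1) + card (T - M1) = card T"
    by (subst card_Un_disjoint[symmetric]) (auto simp: split)
  then show "card (T \<inter> M1) + card (T - M1) \<le> k" using assms(2) by simp
  show "swap_jobs T M1 = swap_jobs (T \<inter> M1 \<union> (T - M1)) M1" by (simp only: split)
  show "T \<inter> M1 \<subseteq> M1" "T - M1 \<subseteq> {..<n} - M1" using assms(1) by auto
qed

lemma found_pair_improving_neighbor:
  assumes M1: "M1 \<subseteq> {..<n}" and "kt \<le> k" and fp: "found_pair n p M1 kt a S1 S2"
  shows "kswap_neighbor n k M1 (swap_jobs (S1 \<union> S2) M1) \<and>
         makespan n p (swap_jobs (S1 \<union> S2) M1) < makespan n p M1"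
proof
  have S: "S1 \<subseteq> {j. j < n \<and> a j}" "S2 \<subseteq> {j. j < n \<and> \<not> a j}"
    and card: "card S1 = (kt + 1) div 2" "card S2 = kt div 2"
    and val: "- sval n p M1 S1 < sval n p M1 S2" "sval n p M1 S2 < Delta n p M1 - sval n p M1 S1"
    using fp unfolding found_pair_def by auto
  have fin: "finite S1" "finite S2" "S1 \<inter> S2 = {}"
    using S by (auto intro: finite_subset)
  have T: "S1 \<union> S2 \<subseteq> {..<n}" using S by auto
  have "card (S1 \<union> S2) = kt" using card_Un_disjoint[OF fin] card by simp
  with T assms(2) show "kswap_neighbor n k M1 (swap_jobs (S1 \<union> S2) M1)"
    by (intro kswap_neighbor_swap_jobs) auto
  show "makespan n p (swap_jobs (S1 \<union> S2) M1) < makespan n p M1"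
    unfolding makespan_swap_jobs_less_iff[OF M1 T] sval_Un[OF fin] using val by linarith
qed

lemma kswap_returns_true_if_balanced:
  assumes T: "T \<subseteq> {..<n}" and val: "0 < sval n p M1 T" "sval n p M1 T < Delta n p M1"
    and balanced: "card {j\<in>T. a j} = (card T + 1) div 2"
  shows "kswap_returns_true n p M1 (card T) a"
proof -
  define S1 where "S1 = {j\<in>T. a j}"
  define S2 where "S2 = {j\<in>T. \<not> a j}"
  have fin: "finite S1" "finite S2" "S1 \<inter> S2 = {}" and T_eq: "T = S1 \<union> S2"
    using finite_subset[OF T] unfolding S1_def S2_def by auto
  have card_S1: "card S1 = (card T + 1) div 2" using balanced unfolding S1_def .
  moreover have "card T = card S1 + card S2" using card_Un_disjoint[OF fin] T_eq by simp
  ultimately have card_S2: "card S2 = card T div 2" by presburger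
  have "sval n p M1 T = sval n p M1 S1 + sval n p M1 S2"
    unfolding T_eq by (rule sval_Un[OF fin])
  with T val card_S1 card_S2 have "found_pair n p M1 (card T) a S1 S2"
    unfolding found_pair_def S1_def S2_def by auto
  then show ?thesis unfolding kswap_returns_true_def by blast
qed

lemma improving_kswap_neighborE:
  assumes M1: "M1 \<subseteq> {..<n}" and "kswap_neighbor n k M1 M1'" "makespan n p M1' < makespan n p M1"
  obtains T where "T \<subseteq> {..<n}" "1 \<le> card T" "card T \<le> k"
    "0 < sval n p M1 T" "sval n p M1 T < Delta n p M1"
proof -
  obtain T' T'' where T: "T' \<subseteq> M1" "T'' \<subseteq> {..<n} - M1" "card T' + card T'' \<le> k"
    and M1': "M1' = swap_jobs (T' \<union> T'') M1"
    using assms(2) unfolding kswap_neighbor_def by blast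
  have sub: "T' \<union> T'' \<subseteq> {..<n}" using T M1 by auto
  then have val: "0 < sval n p M1 (T' \<union> T'')" "sval n p M1 (T' \<union> T'') < Delta n p M1"
    using assms(3) makespan_swap_jobs_less_iff[OF M1 sub] unfolding M1' by auto
  then have "T' \<union> T'' \<noteq> {}" unfolding sval_def by auto
  then have "1 \<le> card (T' \<union> T'')" using finite_subset[OF sub] by (simp add: Suc_le_eq card_gt_0_iff)
  moreover have "card (T' \<union> T'') \<le> k" using card_Un_le[of T' T''] T(3) by simp
  ultimately show ?thesis using that sub val by blast
qed

definition depends_only_on :: "('a \<Rightarrow> 'b) set \<Rightarrow> 'a set \<Rightarrow> bool" where
  "depends_only_on E A \<longleftrightarrow> (\<forall>f g. (\<forall>x\<in>A. f x = g x) \<longrightarrow> (f \<in> E \<longleftrightarrow> g \<in> E))"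

lemma depends_only_onD:
  "depends_only_on E A \<Longrightarrow> (\<And>x. x \<in> A \<Longrightarrow> f x = g x) \<Longrightarrow> f \<in> E \<longleftrightarrow> g \<in> E"
  unfolding depends_only_on_def by blast

lemma depends_only_on_mono:
  "depends_only_on E A \<Longrightarrow> A \<subseteq> B \<Longrightarrow> depends_only_on E B"
  unfolding depends_only_on_def by blast

lemma depends_only_on_INT:
  fixes E :: "'i \<Rightarrow> ('a \<Rightarrow> 'b) set"
  assumes "\<And>i. i \<in> I \<Longrightarrow> depends_only_on (E i) (A i)"
  shows "depends_only_on (\<Inter>i\<in>I. E i) (\<Union>i\<in>I. A i)"
  unfolding depends_only_on_def
proof (intro allI impI)
  fix f g :: "'a \<Rightarrow> 'b"
  assume agree: "\<forall>x\<in>(\<Union>i\<in>I. A i). f x = g x"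
  have "f \<in> E i \<longleftrightarrow> g \<in> E i" if "i \<in> I" for i
    using that agree by (intro depends_only_onD[OF assms[OF that]]) blast
  then show "f \<in> (\<Inter>i\<in>I. E i) \<longleftrightarrow> g \<in> (\<Inter>i\<in>I. E i)" by blast
qed

lemma depends_only_on_Collect_true_set: "depends_only_on {f. P {x\<in>A. f x}} A"
  unfolding depends_only_on_def
proof (intro allI impI)
  fix f g :: "'a \<Rightarrow> bool"
  assume "\<forall>x\<in>A. f x = g x"
  then have "{x\<in>A. f x} = {x\<in>A. g x}" by auto
  then show "f \<in> {f. P {x\<in>A. f x}} \<longleftrightarrow> g \<in> {f. P {x\<in>A. f x}}" by simp
qed

lemma measure_pair_pmf_Times:
  "measure_pmf.prob (pair_pmf M N) (A \<times> B) = measure_pmf.prob M A * measure_pmf.prob N B"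
proof -
  have "measure_pmf.prob (pair_pmf M N) (A \<times> B) =
        measure_pmf.prob (pair_pmf M N) ((A \<inter> set_pmf M) \<times> (B \<inter> set_pmf N))"
    by (subst measure_Int_set_pmf[symmetric]) (simp add: Times_Int_Times)
  also have "\<dots> = measure_pmf.prob M (A \<inter> set_pmf M) * measure_pmf.prob N (B \<inter> set_pmf N)"
    by (intro measure_pmf_prob_product countable_Int2 countable_set_pmf)
  finally show ?thesis by (simp add: measure_Int_set_pmf)
qed

lemma measure_Pi_pmf_depends_only_on:
  assumes "finite A" "A' \<subseteq> A" "depends_only_on E A'"
  shows "measure_pmf.prob (Pi_pmf A dflt p) E = measure_pmf.prob (Pi_pmf A' dflt p) E"
proof -
  have "(\<lambda>x. if x \<in> A' then f x else dflt) \<in> E \<longleftrightarrow> f \<in> E" for f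
    by (rule depends_only_onD[OF assms(3)]) simp
  then have "(\<lambda>f x. if x \<in> A' then f x else dflt) -` E = E" by blast
  then show ?thesis by (simp add: Pi_pmf_subset[OF assms(1,2)])
qed

lemma measure_Pi_pmf_Int_independent:
  assumes "finite A" "finite B" "A \<inter> B = {}"
    and "depends_only_on E A" "depends_only_on F B"
  shows "measure_pmf.prob (Pi_pmf (A \<union> B) dflt p) (E \<inter> F) =
         measure_pmf.prob (Pi_pmf A dflt p) E * measure_pmf.prob (Pi_pmf B dflt p) F"
proof -
  have "(\<lambda>x. if x \<in> A then f x else g x) \<in> E \<longleftrightarrow> f \<in> E" for f g
    by (rule depends_only_onD[OF assms(4)]) simp
  moreover have "(\<lambda>x. if x \<in> A then f x else g x) \<in> F \<longleftrightarrow> g \<in> F" for f g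
    using assms(3) by (intro depends_only_onD[OF assms(5)]) auto
  ultimately have "(\<lambda>(f, g) x. if x \<in> A then f x else g x) -` (E \<inter> F) = E \<times> F" by auto
  then show ?thesis
    unfolding Pi_pmf_union[OF assms(1-3)] measure_map_pmf by (simp only: measure_pair_pmf_Times)
qed

lemma measure_Pi_pmf_INT_blocks:
  fixes r :: nat
  assumes "finite A" "\<And>i. i < r \<Longrightarrow> B i \<subseteq> A" "disjoint_family_on B {..<r}"
    and "\<And>i. i < r \<Longrightarrow> depends_only_on (E i) (B i)"
  shows "measure_pmf.prob (Pi_pmf A dflt p) (\<Inter>i<r. E i) =
         (\<Prod>i<r. measure_pmf.prob (Pi_pmf A dflt p) (E i))"
  using assms
proof (induction r arbitrary: A)
  case (Suc r)
  define U where "U = (\<Union>i<r. B i)"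
  have UA: "U \<subseteq> A" "B r \<subseteq> A"
    using Suc.prems(2) unfolding U_def by (auto dest: less_SucI)
  have "B i \<inter> B r = {}" if "i < r" for i
    using that by (intro disjoint_family_onD[OF Suc.prems(3)]) auto
  then have U: "finite U" "U \<inter> B r = {}"
    using finite_subset[OF UA(1) Suc.prems(1)] unfolding U_def by auto
  have dep: "depends_only_on (\<Inter>i<r. E i) U"
    unfolding U_def using Suc.prems(4) by (intro depends_only_on_INT) auto
  have restrict: "measure_pmf.prob (Pi_pmf A dflt p) (E i) = measure_pmf.prob (Pi_pmf U dflt p) (E i)"
    if "i < r" for i
    using that UA(1) Suc.prems(1)
    by (intro measure_Pi_pmf_depends_only_on depends_only_on_mono[OF Suc.prems(4)]) (auto simp: U_def)
  have split: "(\<Inter>i<Suc r. E i) = (\<Inter>i<r. E i) \<inter> E r" "(\<Union>i<Suc r. B i) = U \<union> B r"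
    unfolding U_def lessThan_Suc by auto
  have "depends_only_on (\<Inter>i<Suc r. E i) (U \<union> B r)"
    using depends_only_on_INT[of "{..<Suc r}" E B] Suc.prems(4) unfolding split by simp
  then have "measure_pmf.prob (Pi_pmf A dflt p) (\<Inter>i<Suc r. E i) =
        measure_pmf.prob (Pi_pmf (U \<union> B r) dflt p) ((\<Inter>i<r. E i) \<inter> E r)"
    using U UA Suc.prems(1) by (subst measure_Pi_pmf_depends_only_on[of A "U \<union> B r"]) (simp_all add: split)
  also have "\<dots> = measure_pmf.prob (Pi_pmf U dflt p) (\<Inter>i<r. E i) *
                  measure_pmf.prob (Pi_pmf (B r) dflt p) (E r)"
    using U dep Suc.prems(4) finite_subset[OF UA(2) Suc.prems(1)]
    by (intro measure_Pi_pmf_Int_independent) auto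
  also have "measure_pmf.prob (Pi_pmf U dflt p) (\<Inter>i<r. E i) =
             (\<Prod>i<r. measure_pmf.prob (Pi_pmf A dflt p) (E i))"
    using Suc.prems U by (subst Suc.IH) (auto simp: U_def restrict disjoint_family_on_def)
  also have "measure_pmf.prob (Pi_pmf (B r) dflt p) (E r) = measure_pmf.prob (Pi_pmf A dflt p) (E r)"
    using Suc.prems by (intro measure_Pi_pmf_depends_only_on[symmetric]) auto
  finally show ?case by simp
qed simp

lemma measure_Pi_pmf_card_eq:
  assumes "finite A" "q \<in> {0..1}"
  shows "measure_pmf.prob (Pi_pmf A dflt (\<lambda>_. bernoulli_pmf q)) {f. card {x\<in>A. f x} = h} =
         pmf (binomial_pmf (card A) q) h"
  by (simp add: binomial_pmf_altdef'[OF assms(1) refl assms(2), of dflt] pmf_map vimage_def)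

lemma central_binomial_Suc:
  "(2 * Suc j choose Suc j) * Suc j = 2 * (2 * j + 1) * (2 * j choose j)"
proof -
  have "Suc j * (Suc (2 * j + 1) choose Suc j) = Suc j * (2 * ((2 * j + 1) choose j))"
    using Suc_times_binomial[of j "2 * j + 1"] by simp
  then have X: "2 * Suc j choose Suc j = 2 * ((2 * j + 1) choose j)"
    by (subst (asm) mult_left_cancel) (simp_all del: binomial_Suc_Suc)
  have Y: "((2 * j + 1) choose j) * Suc j = (2 * j + 1) * (2 * j choose j)"
    using Suc_times_binomial_eq[of "2 * j" j] central_binomial_odd[of "2 * j + 1"]
    by (simp del: binomial_Suc_Suc)
  show ?thesis by (simp only: X Y mult.assoc)
qed

lemma central_binomial_square_lower_bound:
  assumes "1 \<le> j"
  shows "16 ^ j \<le> 4 * real j * real (2 * j choose j) ^ 2"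
  using assms
proof (induction j rule: nat_induct_at_least)
  case base
  show ?case by (simp add: numeral_2_eq_2)
next
  case (Suc j)
  define c where "c = real (2 * j choose j)"
  define c' where "c' = real (2 * Suc j choose Suc j)"
  have step: "c' * (real j + 1) = 2 * (2 * real j + 1) * c"
    using arg_cong[OF central_binomial_Suc[of j], of real] unfolding c_def c'_def
    by (simp add: algebra_simps del: binomial_Suc_Suc)
  have "16 ^ Suc j * (real j + 1) \<le> 16 * (real j + 1) * (4 * real j * c ^ 2)"
    using mult_left_mono[OF Suc.IH, of "16 * (real j + 1)"] unfolding c_def by (simp add: algebra_simps)
  also have "\<dots> = 16 * (4 * real j * (real j + 1)) * c ^ 2" by (simp add: algebra_simps)
  also have "\<dots> \<le> 16 * (2 * real j + 1) ^ 2 * c ^ 2"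
    by (intro mult_right_mono) (auto simp: power2_eq_square algebra_simps)
  also have "\<dots> = 4 * (c' * (real j + 1)) ^ 2"
    unfolding step by (simp add: power2_eq_square algebra_simps)
  also have "\<dots> = 4 * real (Suc j) * c' ^ 2 * (real j + 1)"
    by (simp add: power2_eq_square algebra_simps)
  finally show ?case unfolding c'_def by (rule mult_right_le_imp_le) simp
qed

lemma central_binomial_ratio_lower_bound:
  assumes "1 \<le> j"
  shows "1 / (2 * sqrt j) \<le> real (2 * j choose j) / 4 ^ j"
proof -
  define u where "u = real (2 * j choose j) / 4 ^ j"
  have "real (2 * j choose j) = u * 4 ^ j" unfolding u_def by simp
  moreover have "(16::real) ^ j = (4 ^ j) ^ 2" by (simp add: power2_eq_square flip: power_mult_distrib)
  ultimately have "1 * (4 ^ j) ^ 2 \<le> (4 * real j * u ^ 2) * (4 ^ j) ^ 2"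
    using central_binomial_square_lower_bound[OF assms] by (simp add: power_mult_distrib mult_ac)
  then have "1 \<le> 4 * real j * u ^ 2" by (rule mult_right_le_imp_le) simp
  also have "\<dots> = (2 * sqrt j * u) ^ 2" by (simp add: power_mult_distrib)
  finally have "1 ^ 2 \<le> (2 * sqrt j * u) ^ 2" by simp
  then have "1 \<le> 2 * sqrt j * u"
    by (rule power2_le_imp_le) (simp add: u_def)
  with assms show ?thesis unfolding u_def by (simp add: divide_le_eq mult.commute)
qed

lemma pmf_binomial_half_lower_bound:
  assumes "1 \<le> m"
  shows "1 / (2 * sqrt m) \<le> pmf (binomial_pmf m (1/2)) ((m + 1) div 2)"
proof -
  define j where "j = (m + 1) div 2"
  have j: "1 \<le> j" "j \<le> m" using assms unfolding j_def by auto
  have "1 / (2 * sqrt m) \<le> 1 / (2 * sqrt j)"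
    using j by (intro divide_left_mono) auto
  also have "\<dots> \<le> real (2 * j choose j) / 4 ^ j"
    using central_binomial_ratio_lower_bound[OF j(1)] .
  also have "\<dots> = real (m choose j) / 2 ^ m"
  proof (cases "even m")
    case True
    then have "m = 2 * j" unfolding j_def by auto
    then show ?thesis by (simp add: power_mult)
  next
    case False
    then have m: "2 * j = Suc m" "j = Suc (m div 2)" unfolding j_def by presburger+
    have "(4::real) ^ j = 2 ^ (2 * j)" by (simp add: power_mult)
    then have "(4::real) ^ j = 2 * 2 ^ m" using m(1) by simp
    moreover have "2 * j choose j = 2 * (m choose j)"
      using m central_binomial_odd[OF False] by simp
    ultimately show ?thesis by simp
  qed
  also have "\<dots> = pmf (binomial_pmf m (1/2)) j"
    using j(2) by (simp add: pmf_binomial mult.assoc power_one_over flip: power_add)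
  finally show ?thesis unfolding j_def .
qed

lemma prob_no_run_balanced:
  assumes kt: "kt \<in> {1..k}" and T: "T \<subseteq> {..<n}"
  shows "measure_pmf.prob (proc_pmf n k r) {\<omega>. \<forall>i<r. card {j\<in>T. \<omega> (kt, i, j)} \<noteq> h} =
         (1 - pmf (binomial_pmf (card T) (1/2)) h) ^ r"
proof -
  define A where "A = {1..k} \<times> {..<r} \<times> {..<n}"
  define B where "B i = (\<lambda>j. (kt, i, j)) ` T" for i :: nat
  define E where "E i = {\<omega>. card {x\<in>B i. \<omega> x} \<noteq> h}" for i
  have card_B: "card {x\<in>B i. \<omega> x} = card {j\<in>T. \<omega> (kt, i, j)}" for i \<omega>
  proof -
    have "{x\<in>B i. \<omega> x} = (\<lambda>j. (kt, i, j)) ` {j\<in>T. \<omega> (kt, i, j)}" unfolding B_def by auto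
    then show ?thesis by (simp add: card_image inj_on_def)
  qed
  have "card (B i) = card T" for i unfolding B_def by (simp add: card_image inj_on_def)
  moreover have "finite (B i)" for i unfolding B_def using finite_subset[OF T] by simp
  ultimately have prob_E: "measure_pmf.prob (Pi_pmf (B i) False (\<lambda>_. bernoulli_pmf (1/2))) (E i) =
      1 - pmf (binomial_pmf (card T) (1/2)) h" for i
    unfolding E_def Collect_neg_eq
    by (simp add: measure_pmf.prob_compl[unfolded space_measure_pmf, folded Compl_eq_Diff_UNIV]
                  measure_Pi_pmf_card_eq)
  have dep: "depends_only_on (E i) (B i)" for i
    unfolding E_def by (rule depends_only_on_Collect_true_set)
  have blocks: "B i \<subseteq> A" if "i < r" for i
    using that kt T unfolding A_def B_def by auto
  have "finite A" unfolding A_def by simp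
  have prob_E_A: "measure_pmf.prob (Pi_pmf A False (\<lambda>_. bernoulli_pmf (1/2))) (E i) =
      1 - pmf (binomial_pmf (card T) (1/2)) h" if "i < r" for i
    using measure_Pi_pmf_depends_only_on[OF \<open>finite A\<close> blocks[OF that] dep] prob_E by simp
  have "disjoint_family_on B {..<r}"
    unfolding disjoint_family_on_def B_def by auto
  moreover have "{\<omega>. \<forall>i<r. card {j\<in>T. \<omega> (kt, i, j)} \<noteq> h} = (\<Inter>i<r. E i)"
    unfolding E_def card_B by auto
  ultimately show ?thesis
    unfolding proc_pmf_def A_def[symmetric]
    using measure_Pi_pmf_INT_blocks[OF \<open>finite A\<close> blocks _ dep] prob_E_A by simp
qed

lemma one_minus_power_le_exp:
  fixes q :: real
  assumes "q \<le> 1"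
  shows "(1 - q) ^ r \<le> exp (- (q * r))"
proof -
  have "(1 - q) ^ r \<le> exp (- q) ^ r"
    using assms exp_ge_add_one_self[of "- q"] by (intro power_mono) auto
  then show ?thesis by (simp add: exp_of_nat_mult[symmetric] mult.commute)
qed

lemma prob_kswap_success:
  assumes M1: "M1 \<subseteq> {..<n}" and r: "2 * sqrt k \<le> real r"
    and improving: "kswap_neighbor n k M1 M1'" "makespan n p M1' < makespan n p M1"
  shows "1 - 1 / exp 1 \<le> measure_pmf.prob (proc_pmf n k r)
           {\<omega>. \<exists>kt\<in>{1..k}. \<exists>i<r. kswap_returns_true n p M1 kt (\<lambda>j. \<omega> (kt, i, j))}"
    (is "_ \<le> measure_pmf.prob _ ?success")
proof -
  obtain T where T: "T \<subseteq> {..<n}" "1 \<le> card T" "card T \<le> k"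
    and val: "0 < sval n p M1 T" "sval n p M1 T < Delta n p M1"
    using improving_kswap_neighborE[OF M1 improving] .
  define m where "m = card T"
  define q where "q = pmf (binomial_pmf m (1/2)) ((m + 1) div 2)"
  define F where "F = {\<omega>. \<forall>i<r. card {j\<in>T. \<omega> (m, i, j)} \<noteq> (m + 1) div 2}"
  have m: "m \<in> {1..k}" using T unfolding m_def by simp
  have "- F \<subseteq> ?success"
  proof
    fix \<omega> assume "\<omega> \<in> - F"
    then obtain i where "i < r" "card {j\<in>T. \<omega> (m, i, j)} = (m + 1) div 2"
      unfolding F_def by auto
    then show "\<omega> \<in> ?success"
      using kswap_returns_true_if_balanced[OF T(1) val, of "\<lambda>j. \<omega> (m, i, j)"] m
      unfolding m_def by auto
  qed
  then have lower: "1 - measure_pmf.prob (proc_pmf n k r) F \<le> measure_pmf.prob (proc_pmf n k r) ?success"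
    using measure_pmf.finite_measure_mono[of "- F" ?success]
          measure_pmf.prob_compl[of F, unfolded space_measure_pmf, folded Compl_eq_Diff_UNIV]
    by simp
  have fail: "measure_pmf.prob (proc_pmf n k r) F = (1 - q) ^ r"
    unfolding F_def q_def m_def using prob_no_run_balanced[OF m[unfolded m_def] T(1)] .
  have qr: "1 \<le> q * r"
  proof -
    have "sqrt m \<le> sqrt k" using T(3) unfolding m_def by simp
    then have "2 * sqrt m \<le> r" using r by linarith
    moreover have "1 / (2 * sqrt m) \<le> q"
      using pmf_binomial_half_lower_bound[of m] m unfolding q_def by simp
    ultimately have "1 / (2 * sqrt m) * (2 * sqrt m) \<le> q * r"
      by (intro mult_mono) (auto simp: q_def)
    then show ?thesis using m by simp
  qed
  have "(1 - q) ^ r \<le> exp (- (q * r))"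
    unfolding q_def by (intro one_minus_power_le_exp pmf_le_1)
  also have "\<dots> \<le> exp (- 1)" using qr by simp
  also have "\<dots> = 1 / exp 1" by (simp add: exp_minus inverse_eq_divide)
  finally show ?thesis using lower fail by linarith
qed

lemma binomial_le_power_of_le:
  assumes "N \<le> n"
  shows "N choose m \<le> n ^ m"
proof (cases "m \<le> N")
  case True
  then have "N choose m \<le> N ^ m" by (rule binomial_le_pow)
  also have "\<dots> \<le> n ^ m" using assms by (rule power_mono) simp
  finally show ?thesis .
qed (simp add: binomial_eq_0)

lemma log2_le_two_ln:
  assumes "1 \<le> x"
  shows "log 2 x \<le> 2 * ln x"
proof -
  have "log 2 x = ln x / ln 2" by (simp add: log_def)
  also have "\<dots> \<le> ln x / (2 / 3)"
    using assms ln2_ge_two_thirds by (intro divide_left_mono) auto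
  also have "\<dots> \<le> 2 * ln x" using assms by simp
  finally show ?thesis .
qed

lemma run_cost_le:
  assumes n: "2 \<le> n" and kt: "1 \<le> kt"
  shows "run_cost n kt a \<le> 12 * kt * real n ^ ((kt + 1) div 2) * ln n"
proof -
  define c where "c = (kt + 1) div 2"
  define f where "f = kt div 2"
  define NA where "NA = card {j. j < n \<and> a j} choose c"
  define NB where "NB = card {j. j < n \<and> \<not> a j} choose f"
  define P where "P = real n ^ c"
  define L where "L = ln (real n)"
  define K where "K = kt * P * (2 * L)"
  have cf: "c \<le> kt" "f \<le> c" "f + 1 \<le> kt" using kt unfolding c_def f_def by auto
  have "ln 2 \<le> L" unfolding L_def using n by simp
  then have L: "1 \<le> 2 * L" using ln2_ge_two_thirds by linarith
  have P: "real n \<le> P" "1 \<le> P"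
    using n kt unfolding P_def c_def by (auto intro: order.trans[OF _ power_increasing[of 1]])
  have "card {j. j < n \<and> Q j} \<le> n" for Q using card_mono[of "{..<n}" "{j. j < n \<and> Q j}"] by auto
  then have NA: "NA \<le> P" and NB: "NB \<le> real n ^ f"
    unfolding NA_def NB_def P_def
    by (metis binomial_le_power_of_le of_nat_le_iff of_nat_power)+
  have "real n ^ f \<le> P" unfolding P_def using n cf by (intro power_increasing) auto
  have "1 \<le> real n ^ f" "2 * real n ^ f \<le> real n * real n ^ f"
    using n by (auto intro: mult_right_mono)
  then have "real NB + 1 \<le> real n * real n ^ f" using NB by linarith
  then have "real NB + 1 \<le> real n ^ (f + 1)" by simp
  then have "log 2 (NB + 1) \<le> log 2 (real n ^ (f + 1))" by simp
  also have "\<dots> = real (f + 1) * log 2 n" using n by (intro log_nat_power) simp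
  also have "\<dots> \<le> kt * (2 * L)"
    using cf log2_le_two_ln[of n] n unfolding L_def by (intro mult_mono) auto
  finally have lg: "log 2 (NB + 1) \<le> kt * (2 * L)" .
  have bound: "x * y \<le> K" if "0 \<le> x" "x \<le> P" "0 \<le> y" "y \<le> kt * (2 * L)" for x y
  proof -
    have "x * y \<le> P * (kt * (2 * L))" using that P by (intro mult_mono) auto
    then show ?thesis unfolding K_def by (simp add: mult_ac)
  qed
  have ktL: "real kt \<le> kt * (2 * L)" using L by (simp add: mult_le_cancel_left1)
  have one: "1 \<le> kt * (2 * L)" using ktL kt by linarith
  have "real c \<le> kt" "real f \<le> kt" using cf by simp_all
  then have cL: "real c \<le> kt * (2 * L)" "real f \<le> kt * (2 * L)" using ktL by linarith+
  have NBP: "real NB \<le> P" using NB \<open>real n ^ f \<le> P\<close> by linarith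
  have terms: "real n * 1 \<le> K" "real NA * real c \<le> K" "real NB * real f \<le> K"
      "real NB * log 2 (real NB + 1) \<le> K" "real NA * log 2 (real NB + 1) \<le> K" "1 * real kt \<le> K"
    by (intro bound; use P NA NBP cL lg one ktL in \<open>simp add: add.commute\<close>)+
  have "run_cost n kt a = real n + real NA * real c + real NB * real f
      + real NB * log 2 (real NB + 1) + real NA * log 2 (real NB + 1) + real kt"
    unfolding run_cost_def NA_def NB_def c_def f_def Let_def ..
  also have "\<dots> \<le> 6 * K" using terms by simp
  finally show ?thesis unfolding K_def P_def L_def c_def by simp
qed

lemma sum_power_ceil_half_le:
  fixes x :: real
  assumes x: "2 \<le> x"
  shows "(\<Sum>kt\<in>{1..k}. x ^ ((kt + 1) div 2)) \<le> 4 * x ^ ((k + 1) div 2)"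
proof -
  have even_sum: "(\<Sum>kt\<in>{1..2 * M}. x ^ ((kt + 1) div 2)) \<le> 4 * x ^ M - 4" for M
  proof (induction M)
    case (Suc M)
    have "{1..2 * Suc M} = insert (2 * M + 1) (insert (2 * M + 2) {1..2 * M})" by auto
    then have "(\<Sum>kt\<in>{1..2 * Suc M}. x ^ ((kt + 1) div 2)) =
               (\<Sum>kt\<in>{1..2 * M}. x ^ ((kt + 1) div 2)) + 2 * x ^ Suc M"
      by simp
    also have "\<dots> \<le> 4 * x ^ Suc M - 4"
    proof -
      have "2 * x ^ M \<le> x ^ Suc M" using x by (simp add: mult_right_mono)
      then show ?thesis using Suc.IH by linarith
    qed
    finally show ?case .
  qed simp
  have "(\<Sum>kt\<in>{1..k}. x ^ ((kt + 1) div 2)) \<le> (\<Sum>kt\<in>{1..2 * ((k + 1) div 2)}. x ^ ((kt + 1) div 2))"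
    using x by (intro sum_mono2) auto
  also have "\<dots> \<le> 4 * x ^ ((k + 1) div 2)" using even_sum[of "(k + 1) div 2"] by linarith
  finally show ?thesis .
qed

lemma total_run_cost_le:
  assumes n: "2 \<le> n" and r: "real r \<le> 3 * sqrt k"
  shows "(\<Sum>kt\<in>{1..k}. \<Sum>i<r. run_cost n kt (\<lambda>j. \<omega> (kt, i, j)))
           \<le> 144 * real k powr (3/2) * real n ^ ((k + 1) div 2) * ln n"
proof -
  define L where "L = ln (real n)"
  have L: "0 \<le> L" unfolding L_def using n by simp
  have "(\<Sum>kt\<in>{1..k}. \<Sum>i<r. run_cost n kt (\<lambda>j. \<omega> (kt, i, j)))
        \<le> (\<Sum>kt\<in>{1..k}. \<Sum>i<r. 12 * k * L * real n ^ ((kt + 1) div 2))"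
  proof (intro sum_mono)
    fix kt i assume kt: "kt \<in> {1..k}"
    have "run_cost n kt (\<lambda>j. \<omega> (kt, i, j)) \<le> 12 * kt * real n ^ ((kt + 1) div 2) * L"
      using run_cost_le[OF n] kt unfolding L_def by simp
    also have "\<dots> \<le> 12 * k * real n ^ ((kt + 1) div 2) * L"
      using L kt by (intro mult_right_mono) auto
    finally show "run_cost n kt (\<lambda>j. \<omega> (kt, i, j)) \<le> 12 * k * L * real n ^ ((kt + 1) div 2)"
      by (simp add: mult_ac)
  qed
  also have "\<dots> = r * (12 * k * L) * (\<Sum>kt\<in>{1..k}. real n ^ ((kt + 1) div 2))"
    by (simp add: sum_distrib_left mult_ac)
  also have "\<dots> \<le> (3 * sqrt k) * (12 * k * L) * (4 * real n ^ ((k + 1) div 2))"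
    using sum_power_ceil_half_le[of "real n" k] n r L
    by (intro mult_mono) (auto intro!: sum_nonneg)
  also have "\<dots> = 144 * (k * sqrt k) * real n ^ ((k + 1) div 2) * L" by simp
  also have "k * sqrt k = real k powr (3/2)"
    using powr_add[of "real k" 1 "1/2"] by (simp add: powr_half_sqrt)
  finally show ?thesis unfolding L_def .
qed

lemma two_sqrt_le_nat_ceiling:
  fixes k :: nat
  assumes "1 \<le> k"
  shows "2 * sqrt k \<le> real (nat \<lceil>2 * sqrt k\<rceil>)" "real (nat \<lceil>2 * sqrt k\<rceil>) \<le> 3 * sqrt k"
proof -
  have "1 \<le> sqrt k" using assms by simp
  then show "2 * sqrt k \<le> real (nat \<lceil>2 * sqrt k\<rceil>)" "real (nat \<lceil>2 * sqrt k\<rceil>) \<le> 3 * sqrt k"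
    by linarith+
qed

theorem theorem1:
  "\<exists>C0 C1 :: real. C0 > 0 \<and> C1 > 0 \<and>
    (\<forall>(n::nat) (k::nat) (p::nat \<Rightarrow> real) (M1::nat set).
       k \<ge> 1 \<longrightarrow> (\<forall>j<n. p j > 0) \<longrightarrow> M1 \<subseteq> {..<n} \<longrightarrow>
       (let r = nat \<lceil>C0 * sqrt (real k)\<rceil> in
         (n \<ge> 2 \<longrightarrow>
            (\<forall>\<omega> :: nat \<times> nat \<times> nat \<Rightarrow> bool.
               (\<Sum>kt\<in>{1..k}. \<Sum>i<r. run_cost n kt (\<lambda>j. \<omega> (kt, i, j)))
                 \<le> C1 * real k powr (3/2) * real n ^ ((k + 1) div 2) * ln (real n)))
         \<and>
         ((\<exists>M1'. kswap_neighbor n k M1 M1' \<and> makespan n p M1' < makespan n p M1) \<longrightarrow>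
            measure_pmf.prob (proc_pmf n k r)
              {\<omega>. \<exists>kt\<in>{1..k}. \<exists>i<r. kswap_returns_true n p M1 kt (\<lambda>j. \<omega> (kt, i, j))}
              \<ge> 1 - 1 / exp 1)
         \<and>
         (\<forall>kt\<in>{1..k}. \<forall>a S1 S2. found_pair n p M1 kt a S1 S2 \<longrightarrow>
            kswap_neighbor n k M1 (swap_jobs (S1 \<union> S2) M1) \<and>
            makespan n p (swap_jobs (S1 \<union> S2) M1) < makespan n p M1)))"
proof (rule exI[of _ 2], rule exI[of _ 144], intro conjI allI impI, goal_cases)
  case (3 n k p M1)
  then have k: "1 \<le> k" and M1: "M1 \<subseteq> {..<n}" by simp_all
  define r where "r = nat \<lceil>2 * sqrt (real k)\<rceil>"
  note r = two_sqrt_le_nat_ceiling[OF k, folded r_def]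
  show ?case
    unfolding Let_def r_def[symmetric]
    using total_run_cost_le[OF _ r(2)] prob_kswap_success[OF M1 r(1)]
      found_pair_improving_neighbor[OF M1]
    by (auto 4 3)
qed simp_all

end
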